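(* Consider the DF-SSQP algorithm described in the context and suppose (A1) holds. For each $k$ decompose $\tilde\Delta x_k=u_k+v_k$ with $u_k\in\mathrm{Null}(\tilde G_k)$ and $v_k\in\mathrm{Range}(\tilde G_k^T)$. Then there exist constants $\kappa_v,\kappa_u,\kappa_q>0$ such that for all $k\ge0$: (a) $\max\{\|v_k\|,\|v_k\|^2\}\le\kappa_v\|c_k\|$; (b) if $\|u_k\|^2\ge\kappa_u\|v_k\|^2$, then $\tilde\Delta x_k^T\tilde B_k\tilde\Delta x_k\ge0.5\,\kappa_{1,\tilde B}\|u_k\|^2$; (c) $\Delta q(\tilde\Delta x_k;\tau_k,x_k,\bar g_k,\tilde B_k)\ge\kappa_q\tau_k(\|\tilde\Delta x_k\|^2+\|c_k\|)$.
   Context: Problem and notation. Let $\mathcal P$ be a probability distribution on a sample space, $F(\cdot;\xi):\mathbb R^d\to\mathbb R$ for each sample $\xi$, $f(x)=\mathbb E_{\xi\sim\mathcal P}[F(x;\xi)]$, and $c:\mathbb R^d\to\mathbb R^m$. The problem is $\min_{x\in\mathbb R^d} f(x)$ subject to $c(x)=0$. Let $G(x)=\nabla c(x)\in\mathbb R^{m\times d}$ denote the constraint Jacobian, $c^j$ the $j$-th component of $c$, and $\mathcal L(x,\lambda)=f(x)+\lambda^Tc(x)$ the Lagrangian. A subscript $k$ denotes evaluation at the iterate $x_k$: $f_k=f(x_k)$, $\nabla f_k=\nabla f(x_k)$, $c_k=c(x_k)$, $G_k=G(x_k)$. For a vector $v$ with nonzero entries, $v^j$ is its $j$-th entry, $v^{-1}$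 is the entrywise reciprocal and $v^{-T}=(v^{-1})^T$. Norms are Euclidean norms for vectors and operator norms for matrices. Algorithm (DF-SSQP). Inputs: $(x_0,\lambda_0)\in\mathbb R^d\times\mathbb R^m$, $\bar g_{-1}\in\mathbb R^d$, $\bar G_{-1}\in\mathbb R^{m\times d}$, $\bar B_{-1}=I$, $\tau_{-1},\nu_{-1}>0$; positive sequences $\{b_k\},\{\tilde b_k\},\{\alpha_k\},\{\beta_k\}$; parameters $\sigma,\epsilon\in(0,1)$, $\psi\ge0$, $p\ge1$; positive constants $\kappa_{\nabla f},\kappa_{\nabla c}$ (Lipschitz constants of $\nabla f$ and $\nabla c$); a distribution $\mathcal P_\Delta$ on $\mathbb R^d$. For $k=0,1,2,\dots$: (1) Draw $\xi_k\sim\mathcal P$ and two independent directions $\Delta_k,\tilde\Delta_k\sim\mathcal P_\Delta$. (2) Gradient estimates: $\hat\nabla F(x_k;\xi_k)=\frac{F(x_k+b_k\Delta_k;\xi_k)-F(x_k-b_k\Delta_k;\xi_k)}{2b_k}\Delta_k^{-1}$ and $\hat\nabla c(x_k)=\frac{c(x_k+b_k\Delta_k)-c(x_k-b_k\Delta_k)}{2b_k}\Delta_k^{-T}\in\mathbb R^{m\times d}$; averages $\bar g_k=(1-\beta_k)\bar g_{k-1}+\beta_k\hat\nabla F(x_k;\xi_k)$, $\bar G_k=(1-\beta_k)\bar G_{k-1}+\beta_k\hat\nabla c(x_k)$. (3) Hessian estimates: for each sign $\pm$, $\tilde\nabla F(x_k\pm b_k\Delta_k;\xi_k)=\frac{F(x_k\pm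 b_k\Delta_k+\tilde b_k\tilde\Delta_k;\xi_k)-F(x_k\pm b_k\Delta_k;\xi_k)}{\tilde b_k}\tilde\Delta_k^{-1}$ and $\tilde\nabla c(x_k\pm b_k\Delta_k)=\frac{c(x_k\pm b_k\Delta_k+\tilde b_k\tilde\Delta_k)-c(x_k\pm b_k\Delta_k)}{\tilde b_k}\tilde\Delta_k^{-T}$; $\tilde\nabla c^j$ is the transpose of the $j$-th row of $\tilde\nabla c$; $\delta\tilde\nabla F_k=\tilde\nabla F(x_k+b_k\Delta_k;\xi_k)-\tilde\nabla F(x_k-b_k\Delta_k;\xi_k)$, $\delta\tilde\nabla c^j_k=\tilde\nabla c^j(x_k+b_k\Delta_k)-\tilde\nabla c^j(x_k-b_k\Delta_k)$; $\hat\nabla^2F(x_k;\xi_k)=\frac12\big[\frac{\delta\tilde\nabla F_k}{2b_k}\Delta_k^{-T}+\Delta_k^{-1}\frac{(\delta\tilde\nabla F_k)^T}{2b_k}\big]$ and $\hat\nabla^2c^j_k=\frac12\big[\frac{\delta\tilde\nabla c^j_k}{2b_k}\Delta_k^{-T}+\Delta_k^{-1}\frac{(\delta\tilde\nabla c^j_k)^T}{2b_k}\big]$, $1\le j\le m$. (4) $\tilde G_k=\bar G_k+\delta_k^G$ with $\delta_k^G$ a perturbation making $\tilde G_k$ of full row rank; $\bar\nabla_x\mathcal L_k=\bar g_k+\tilde G_k^T\lambda_k$; $\hat\nabla_x^2\mathcal L_k=\hat\nabla^2F(x_k;\xi_k)+\sum_{j=1}^m\lambda_k^j\hat\nabla^2c^j_k$;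 $\bar B_k=(1-\beta_k)\bar B_{k-1}+\beta_k\hat\nabla_x^2\mathcal L_k$; $\tilde B_k=\bar B_k+\delta_k^B$ with $\delta_k^B$ a perturbation making $\tilde B_k$ positive definite on $\ker\tilde G_k$. (5) Solve $\tilde W_k\binom{\tilde\Delta x_k}{\tilde\Delta\lambda_k}=-\binom{\bar\nabla_x\mathcal L_k}{c_k}$, where $\tilde W_k=\begin{pmatrix}\tilde B_k&\tilde G_k^T\\ \tilde G_k&0\end{pmatrix}$. (6) With $\Delta q(d;\tau,x_k,\bar g_k,\tilde B_k)=-\tau(\bar g_k^Td+\tfrac12\max\{d^T\tilde B_kd,0\})+\|c_k\|$: let $s_k=\bar g_k^T\tilde\Delta x_k+\max\{\tilde\Delta x_k^T\tilde B_k\tilde\Delta x_k,0\}$; $\tau_k^{trial}=\infty$ if $s_k\le0$, else $\tau_k^{trial}=(1-\sigma)\|c_k\|/s_k$; $\tau_k=\tau_{k-1}$ if $\tau_{k-1}\le\tau_k^{trial}$, else $\tau_k=(1-\epsilon)\tau_k^{trial}$. Let $\nu_k^{trial}=\Delta q(\tilde\Delta x_k;\tau_k,x_k,\bar g_k,\tilde B_k)/\|\tilde\Delta x_k\|^2$; $\nu_k=\nu_{k-1}$ if $\nu_{k-1}\le\nu_k^{trial}$, else $\nu_k=(1-\epsilon)\nu_k^{trial}$. (7) Pick any (random) stepsize $\bar\alpha_k$ with $\frac{\nu_k\alpha_k}{\tau_k\kappa_{\nabla f}+\kappa_{\nabla c}}\le\bar\alpha_k\le\frac{\nu_k\alpha_k}{\tau_k\kappa_{\nabla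 f}+\kappa_{\nabla c}}+\psi\alpha_k^p$, and set $(x_{k+1},\lambda_{k+1})=(x_k,\lambda_k)+\bar\alpha_k(\tilde\Delta x_k,\tilde\Delta\lambda_k)$. Assumption (A1): There is an open convex set $\mathcal X\subseteq\mathbb R^d$ containing all points $x_k$, $x_k\pm b_k\Delta_k$, $x_k\pm b_k\Delta_k+\tilde b_k\tilde\Delta_k$; $f$ and $c$ are thrice differentiable with bounded first, second and third derivatives on $\mathcal X$; $f$ is bounded below on $\mathcal X$; there are constants $\kappa_c,\kappa_{1,G},\kappa_{2,G},\kappa_{1,\tilde G},\kappa_{2,\tilde G}>0$ with $\|c_k\|\le\kappa_c$, $\kappa_{1,G}I\preceq G_kG_k^T\preceq\kappa_{2,G}I$, $\kappa_{1,\tilde G}I\preceq\tilde G_k\tilde G_k^T\preceq\kappa_{2,\tilde G}I$ for all $k\ge0$; and constants $\kappa_{1,\tilde B},\kappa_{2,\tilde B}>0$ with $x^T\tilde B_kx\ge\kappa_{1,\tilde B}\|x\|^2$ for all $x$ with $\tilde G_kx=0$ and $\|\tilde B_k\|\le\kappa_{2,\tilde B}$. *)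

theory Defs
  imports "HOL-Analysis.Analysis"
begin

text \<open>Vectors in R^d are real^'d, matrices in R^(m x d) are real^'d^'m (m rows).\<close>

definition inv_vec :: "real^'n \<Rightarrow> real^'n" where
  "inv_vec v = (\<chi> i. 1 / v $ i)"

definition outer :: "real^'n \<Rightarrow> real^'k \<Rightarrow> real^'k^'n" where
  "outer a b = (\<chi> i j. a $ i * b $ j)"

definition spsa_grad :: "(real^'d \<Rightarrow> real) \<Rightarrow> real^'d \<Rightarrow> real \<Rightarrow> real^'d \<Rightarrow> real^'d" where
  "spsa_grad \<phi> y h D = ((\<phi> (y + h *\<^sub>R D) - \<phi> (y - h *\<^sub>R D)) / (2 * h)) *\<^sub>R inv_vec D"

definition fwd_grad :: "(real^'d \<Rightarrow> real) \<Rightarrow> real^'d \<Rightarrow> real \<Rightarrow> real^'d \<Rightarrow> real^'d" where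
  "fwd_grad \<phi> y h D = ((\<phi> (y + h *\<^sub>R D) - \<phi> y) / h) *\<^sub>R inv_vec D"

definition hess_est :: "(real^'d \<Rightarrow> real) \<Rightarrow> real^'d \<Rightarrow> real \<Rightarrow> real^'d \<Rightarrow> real \<Rightarrow> real^'d \<Rightarrow> real^'d^'d" where
  "hess_est \<phi> y h D h' D' =
     (let \<delta> = fwd_grad \<phi> (y + h *\<^sub>R D) h' D' - fwd_grad \<phi> (y - h *\<^sub>R D) h' D'
      in (1/2) *\<^sub>R (outer ((1 / (2 * h)) *\<^sub>R \<delta>) (inv_vec D) + outer (inv_vec D) ((1 / (2 * h)) *\<^sub>R \<delta>)))"

text \<open>Model reduction Delta q(d; tau, x_k, g, B) (step (6)); cx stands for c(x_k).\<close>
definition dq :: "real^'d \<Rightarrow> real \<Rightarrow> real^'m \<Rightarrow> real^'d \<Rightarrow> real^'d^'d \<Rightarrow> real" where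
  "dq d \<tau> cx g B = - \<tau> * (g \<bullet> d + (1/2) * max (d \<bullet> (B *v d)) 0) + norm cx"

text \<open>One realization of the DF-SSQP iteration (steps (1)-(7)); the "-1" quantities
  are g0, G0, tau0, nu0 (and Bbar_{-1} = I).  Perturbations delta^G, delta^B are arbitrary,
  so Gt, Bt are arbitrary subject to the stated rank / definiteness requirements.\<close>
definition dfssqp_run ::
  "(real^'d \<Rightarrow> 's \<Rightarrow> real) \<Rightarrow> (real^'d \<Rightarrow> real^'m) \<Rightarrow>
   (nat \<Rightarrow> 's) \<Rightarrow> (nat \<Rightarrow> real^'d) \<Rightarrow> (nat \<Rightarrow> real^'d) \<Rightarrow>
   (nat \<Rightarrow> real) \<Rightarrow> (nat \<Rightarrow> real) \<Rightarrow> (nat \<Rightarrow> real) \<Rightarrow> (nat \<Rightarrow> real) \<Rightarrow>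
   real \<Rightarrow> real \<Rightarrow> real \<Rightarrow> real \<Rightarrow> real \<Rightarrow> real \<Rightarrow> real^'d \<Rightarrow> real^'d^'m \<Rightarrow> real \<Rightarrow> real \<Rightarrow>
   (nat \<Rightarrow> real^'d) \<Rightarrow> (nat \<Rightarrow> real^'m) \<Rightarrow>
   (nat \<Rightarrow> real^'d) \<Rightarrow> (nat \<Rightarrow> real^'d^'m) \<Rightarrow> (nat \<Rightarrow> real^'d^'d) \<Rightarrow>
   (nat \<Rightarrow> real^'d^'m) \<Rightarrow> (nat \<Rightarrow> real^'d^'d) \<Rightarrow>
   (nat \<Rightarrow> real^'d) \<Rightarrow> (nat \<Rightarrow> real^'m) \<Rightarrow>
   (nat \<Rightarrow> real) \<Rightarrow> (nat \<Rightarrow> real) \<Rightarrow> (nat \<Rightarrow> real) \<Rightarrow> bool" where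
  "dfssqp_run F c xi Dl Dt b bt alpha beta sgm eps psi p kf kc g0 G0 tau0 nu0
      x lam gbar Gbar Bbar Gt Bt dx dlam tau nu abar \<longleftrightarrow>
   (\<forall>k. b k > 0 \<and> bt k > 0 \<and> alpha k > 0 \<and> beta k > 0) \<and>
   (\<forall>k i. Dl k $ i \<noteq> 0 \<and> Dt k $ i \<noteq> 0) \<and>
   (\<forall>k. let gprev = (if k = 0 then g0 else gbar (k - 1));
            Gprev = (if k = 0 then G0 else Gbar (k - 1));
            Bprev = (if k = 0 then mat 1 else Bbar (k - 1));
            taup = (if k = 0 then tau0 else tau (k - 1));
            nup = (if k = 0 then nu0 else nu (k - 1));
            ghat = spsa_grad (\<lambda>y. F y (xi k)) (x k) (b k) (Dl k);
            Ghat = (\<chi> j. spsa_grad (\<lambda>y. c y $ j) (x k) (b k) (Dl k)) :: real^'d^'m;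
            HL = hess_est (\<lambda>y. F y (xi k)) (x k) (b k) (Dl k) (bt k) (Dt k)
                 + (\<Sum>j\<in>UNIV. lam k $ j *\<^sub>R hess_est (\<lambda>y. c y $ j) (x k) (b k) (Dl k) (bt k) (Dt k));
            s = gbar k \<bullet> dx k + max (dx k \<bullet> (Bt k *v dx k)) 0;
            nutr = dq (dx k) (tau k) (c (x k)) (gbar k) (Bt k) / (norm (dx k))\<^sup>2;
            lo = nu k * alpha k / (tau k * kf + kc)
        in gbar k = (1 - beta k) *\<^sub>R gprev + beta k *\<^sub>R ghat \<and>
           Gbar k = (1 - beta k) *\<^sub>R Gprev + beta k *\<^sub>R Ghat \<and>
           Bbar k = (1 - beta k) *\<^sub>R Bprev + beta k *\<^sub>R HL \<and>
           (\<forall>z. transpose (Gt k) *v z = 0 \<longrightarrow> z = 0) \<and>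
           (\<forall>z. Gt k *v z = 0 \<and> z \<noteq> 0 \<longrightarrow> z \<bullet> (Bt k *v z) > 0) \<and>
           Bt k *v dx k + transpose (Gt k) *v dlam k = - (gbar k + transpose (Gt k) *v lam k) \<and>
           Gt k *v dx k = - c (x k) \<and>
           tau k = (if s \<le> 0 \<or> taup \<le> (1 - sgm) * norm (c (x k)) / s then taup
                    else (1 - eps) * ((1 - sgm) * norm (c (x k)) / s)) \<and>
           nu k = (if nup \<le> nutr then nup else (1 - eps) * nutr) \<and>
           lo \<le> abar k \<and> abar k \<le> lo + psi * alpha k powr p \<and>
           x (Suc k) = x k + abar k *\<^sub>R dx k \<and>
           lam (Suc k) = lam k + abar k *\<^sub>R dlam k)"

text \<open>The parts of Assumption (A1) concerning the iterates (Gjac is the Jacobian of c).\<close>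
definition A1_bounds ::
  "(real^'d \<Rightarrow> real^'m) \<Rightarrow> (real^'d \<Rightarrow> real^'d^'m) \<Rightarrow> (real^'d) set \<Rightarrow>
   (nat \<Rightarrow> real^'d) \<Rightarrow> (nat \<Rightarrow> real^'d) \<Rightarrow> (nat \<Rightarrow> real) \<Rightarrow> (nat \<Rightarrow> real) \<Rightarrow>
   (nat \<Rightarrow> real^'d) \<Rightarrow> (nat \<Rightarrow> real^'d^'m) \<Rightarrow> (nat \<Rightarrow> real^'d^'d) \<Rightarrow>
   real \<Rightarrow> real \<Rightarrow> real \<Rightarrow> real \<Rightarrow> real \<Rightarrow> real \<Rightarrow> real \<Rightarrow> bool" where
  "A1_bounds c Gjac X Dl Dt b bt x Gt Bt kc k1G k2G k1Gt k2Gt k1B k2B \<longleftrightarrow>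
   open X \<and> convex X \<and>
   (\<forall>y\<in>X. (c has_derivative (\<lambda>h. Gjac y *v h)) (at y)) \<and>
   (\<forall>k. x k \<in> X \<and> x k + b k *\<^sub>R Dl k \<in> X \<and> x k - b k *\<^sub>R Dl k \<in> X \<and>
        x k + b k *\<^sub>R Dl k + bt k *\<^sub>R Dt k \<in> X \<and> x k - b k *\<^sub>R Dl k + bt k *\<^sub>R Dt k \<in> X) \<and>
   (\<forall>k. norm (c (x k)) \<le> kc) \<and>
   (\<forall>k z. k1G * (norm z)\<^sup>2 \<le> z \<bullet> ((Gjac (x k) ** transpose (Gjac (x k))) *v z) \<and>
          z \<bullet> ((Gjac (x k) ** transpose (Gjac (x k))) *v z) \<le> k2G * (norm z)\<^sup>2) \<and>
   (\<forall>k z. k1Gt * (norm z)\<^sup>2 \<le> z \<bullet> ((Gt k ** transpose (Gt k)) *v z) \<and>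
          z \<bullet> ((Gt k ** transpose (Gt k)) *v z) \<le> k2Gt * (norm z)\<^sup>2) \<and>
   (\<forall>k z. Gt k *v z = 0 \<longrightarrow> z \<bullet> (Bt k *v z) \<ge> k1B * (norm z)\<^sup>2) \<and>
   (\<forall>k. onorm (\<lambda>z. Bt k *v z) \<le> k2B)"

end

theory Submission
  imports Defs
begin

(* The linearized constraint G dx = -c gives
   G v = -c, and uniform positive definiteness of G G^T yields sqrt k1 |v| <= |G v| = |c|;
   with |c| <= kcb this also bounds |v|^2 linearly in |c|.  When u dominates v, the curvature
   of B on the null space of G beats the cross terms, which are controlled by the operator
   norm of B.  Finally, the merit parameter update ensures tau s <= (1 - sigma) |c| whenever
   s > 0, so the model reduction is at least sigma |c| + tau/2 max(dx^T B dx, 0): in the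
   tangential case the curvature term pays for |dx|^2, otherwise |dx|^2 = |u|^2 + |v|^2 is
   itself of order |c| by the normal bound. *)

lemma inner_transpose_matrix_vector:
  fixes A :: "real^'n^'m"
  shows "x \<bullet> (transpose A *v y) = (A *v x) \<bullet> y"
  by (metis dot_lmul_matrix inner_commute transpose_matrix_vector)

lemma inner_matrix_mult_transpose:
  fixes G :: "real^'n^'m"
  shows "z \<bullet> ((G ** transpose G) *v z) = (norm (transpose G *v z))\<^sup>2"
  by (metis inner_transpose_matrix_vector matrix_vector_mul_assoc power2_norm_eq_inner
      transpose_transpose)

lemma orthogonal_null_space_range_transpose:
  fixes G :: "real^'n^'m"
  assumes "G *v u = 0" and "v \<in> range (\<lambda>w. transpose G *v w)"
  shows "orthogonal u v"
  using assms
  by (auto simp: orthogonal_def inner_transpose_matrix_vector simp del: transpose_matrix_vector)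

lemma abs_inner_matrix_vector_le_onorm:
  fixes B :: "real^'n^'m"
  assumes "onorm (\<lambda>z. B *v z) \<le> K"
  shows "\<bar>x \<bullet> (B *v y)\<bar> \<le> K * norm x * norm y"
proof -
  have "\<bar>x \<bullet> (B *v y)\<bar> \<le> norm x * norm (B *v y)"
    by (rule Cauchy_Schwarz_ineq2)
  also have "norm (B *v y) \<le> K * norm y"
    using onorm[OF matrix_vector_mul_bounded_linear, of B y] assms
    by (meson mult_right_mono norm_ge_zero order.trans)
  finally show ?thesis
    by (simp add: mult_left_mono mult.assoc mult.left_commute)
qed

lemma norm_range_transpose_le:
  fixes G :: "real^'n^'m"
  assumes lower: "\<forall>z. k * (norm z)\<^sup>2 \<le> z \<bullet> ((G ** transpose G) *v z)"
    and "0 < k" and "v \<in> range (\<lambda>w. transpose G *v w)"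
  shows "sqrt k * norm v \<le> norm (G *v v)"
proof -
  obtain w where v: "v = transpose G *v w"
    using assms(3) by blast
  have "k * (norm w)\<^sup>2 \<le> (norm v)\<^sup>2"
    using lower[rule_format, of w] by (simp add: v inner_matrix_mult_transpose)
  then have w: "sqrt k * norm w \<le> norm v"
    using real_sqrt_le_mono \<open>0 < k\<close> by (fastforce simp: real_sqrt_mult)
  have "(norm v)\<^sup>2 = (G *v v) \<bullet> w"
    by (simp add: power2_norm_eq_inner v inner_transpose_matrix_vector[symmetric])
  also have "\<dots> \<le> norm (G *v v) * norm w"
    by (rule norm_cauchy_schwarz)
  finally have "sqrt k * (norm v)\<^sup>2 \<le> norm (G *v v) * (sqrt k * norm w)"
    using \<open>0 < k\<close> by (simp add: mult_left_mono mult.left_commute)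
  also have "\<dots> \<le> norm (G *v v) * norm v"
    using w by (simp add: mult_left_mono)
  finally show ?thesis
    by (cases "v = 0") (simp_all add: power2_eq_square)
qed

lemma quadratic_form_tangential_dominant:
  fixes B :: "real^'n^'n"
  assumes curv: "k1 * (norm u)\<^sup>2 \<le> u \<bullet> (B *v u)" and bound: "onorm (\<lambda>z. B *v z) \<le> k2"
    and "0 < k1" and small: "(8 * k2 / k1 + 1) * norm v \<le> norm u"
  shows "k1 / 2 * (norm u)\<^sup>2 \<le> (u + v) \<bullet> (B *v (u + v))"
proof -
  define a t where "a = norm u" and "t = norm v"
  have "0 \<le> k2"
    using bound onorm_pos_le[OF matrix_vector_mul_bounded_linear, of B] by linarith
  then have "0 \<le> 8 * k2 / k1 * t"
    using \<open>0 < k1\<close> by (simp add: t_def)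
  with small have "t \<le> a"
    by (simp add: a_def t_def algebra_simps)
  have "(8 * k2 + k1) * t \<le> k1 * a"
    using small \<open>0 < k1\<close> by (simp add: a_def t_def field_simps)
  moreover have "0 \<le> k1 * t"
    using \<open>0 < k1\<close> by (simp add: t_def)
  ultimately have "8 * k2 * t \<le> k1 * a"
    by (simp add: algebra_simps)
  then have "8 * (k2 * t) * a \<le> k1 * a * a" and "8 * (k2 * t) * t \<le> k1 * a * t"
    by (simp_all add: a_def t_def mult_right_mono)
  moreover have "k1 * a * t \<le> k1 * a * a"
    using \<open>t \<le> a\<close> \<open>0 < k1\<close> by (simp add: a_def mult_left_mono)
  moreover have "- (k2 * a * t) \<le> u \<bullet> (B *v v)" "- (k2 * a * t) \<le> v \<bullet> (B *v u)"
    "- (k2 * t * t) \<le> v \<bullet> (B *v v)"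
    using abs_inner_matrix_vector_le_onorm[OF bound, of u v]
      abs_inner_matrix_vector_le_onorm[OF bound, of v u]
      abs_inner_matrix_vector_le_onorm[OF bound, of v v]
    by (auto simp: a_def t_def mult_ac)
  moreover have "(u + v) \<bullet> (B *v (u + v))
      = u \<bullet> (B *v u) + u \<bullet> (B *v v) + v \<bullet> (B *v u) + v \<bullet> (B *v v)"
    by (simp add: matrix_vector_right_distrib inner_add_left inner_add_right)
  moreover have "0 \<le> k1 * a * a"
    using \<open>0 < k1\<close> by (simp add: a_def)
  ultimately show ?thesis
    using curv by (simp add: a_def power2_eq_square mult_ac)
qed

definition merit_param_update :: "real \<Rightarrow> real \<Rightarrow> real \<Rightarrow> real \<Rightarrow> real" where
  "merit_param_update eps A s tp = (if s \<le> 0 \<or> tp \<le> A / s then tp else (1 - eps) * (A / s))"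

lemma merit_param_update_nonneg:
  "0 \<le> tp \<Longrightarrow> 0 \<le> A \<Longrightarrow> eps \<le> 1 \<Longrightarrow> 0 \<le> merit_param_update eps A s tp"
  by (simp add: merit_param_update_def)

lemma merit_param_update_le:
  assumes "0 \<le> A" and "0 \<le> eps"
  shows "merit_param_update eps A s tp \<le> tp"
proof (cases "s \<le> 0 \<or> tp \<le> A / s")
  case False
  then have "(1 - eps) * (A / s) \<le> A / s"
    using assms mult_right_mono[of "1 - eps" 1 "A / s"] by simp
  with False show ?thesis
    by (simp add: merit_param_update_def)
qed (simp add: merit_param_update_def)

lemma merit_param_update_mult_le:
  assumes "0 < s" and "0 \<le> A" and "0 \<le> eps"
  shows "merit_param_update eps A s tp * s \<le> A"
proof (cases "tp \<le> A / s")
  case True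
  with assms show ?thesis
    by (simp add: merit_param_update_def pos_le_divide_eq)
next
  case False
  have "(1 - eps) * A \<le> A"
    using assms mult_right_mono[of "1 - eps" 1 A] by simp
  with False assms show ?thesis
    by (simp add: merit_param_update_def)
qed

lemma dfssqp_run_step:
  assumes "dfssqp_run F c xi Dl Dt b bt alpha beta sgm eps psi p kf kc g0 G0 tau0 nu0
             x lam gbar Gbar Bbar Gt Bt dx dlam tau nu abar"
  shows dfssqp_run_linearized_constraint: "Gt k *v dx k = - c (x k)"
    and dfssqp_run_merit_param: "tau k = merit_param_update eps ((1 - sgm) * norm (c (x k)))
          (gbar k \<bullet> dx k + max (dx k \<bullet> (Bt k *v dx k)) 0) (if k = 0 then tau0 else tau (k - 1))"
proof -
  note step = assms[unfolded dfssqp_run_def, THEN conjunct2, THEN conjunct2, THEN spec[of _ k],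
      unfolded Let_def]
  show "Gt k *v dx k = - c (x k)"
    using step by blast
  show "tau k = merit_param_update eps ((1 - sgm) * norm (c (x k)))
          (gbar k \<bullet> dx k + max (dx k \<bullet> (Bt k *v dx k)) 0) (if k = 0 then tau0 else tau (k - 1))"
    using step unfolding merit_param_update_def by blast
qed

lemma dfssqp_run_merit_param_bounds:
  assumes run: "dfssqp_run F c xi Dl Dt b bt alpha beta sgm eps psi p kf kc g0 G0 tau0 nu0
                  x lam gbar Gbar Bbar Gt Bt dx dlam tau nu abar"
    and "sgm \<le> 1" "0 \<le> eps" "eps \<le> 1" "0 \<le> tau0"
  shows "0 \<le> tau k \<and> tau k \<le> tau0"
proof (induction k)
  case 0
  have "0 \<le> (1 - sgm) * norm (c (x 0))"
    using assms by simp
  then show ?case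
    using assms
    by (simp add: dfssqp_run_merit_param[OF run, of 0] merit_param_update_nonneg merit_param_update_le)
next
  case (Suc k)
  let ?A = "(1 - sgm) * norm (c (x (Suc k)))"
  let ?s = "gbar (Suc k) \<bullet> dx (Suc k) + max (dx (Suc k) \<bullet> (Bt (Suc k) *v dx (Suc k))) 0"
  have "0 \<le> ?A"
    using assms by simp
  then have "0 \<le> merit_param_update eps ?A ?s (tau k)" "merit_param_update eps ?A ?s (tau k) \<le> tau k"
    using Suc.IH assms by (simp_all add: merit_param_update_nonneg merit_param_update_le)
  then show ?case
    using Suc.IH by (simp add: dfssqp_run_merit_param[OF run, of "Suc k"])
qed

lemma dfssqp_run_merit_param_mult_le:
  assumes "dfssqp_run F c xi Dl Dt b bt alpha beta sgm eps psi p kf kc g0 G0 tau0 nu0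
             x lam gbar Gbar Bbar Gt Bt dx dlam tau nu abar"
    and "sgm \<le> 1" "0 \<le> eps"
    and "0 < gbar k \<bullet> dx k + max (dx k \<bullet> (Bt k *v dx k)) 0"
  shows "tau k * (gbar k \<bullet> dx k + max (dx k \<bullet> (Bt k *v dx k)) 0) \<le> (1 - sgm) * norm (c (x k))"
  using assms by (simp add: dfssqp_run_merit_param[OF assms(1)] merit_param_update_mult_le)

lemma A1_boundsD:
  assumes "A1_bounds c Gjac X Dl Dt b bt x Gt Bt kcb k1G k2G k1Gt k2Gt k1B k2B"
  shows "norm (c (x k)) \<le> kcb"
    and "\<forall>z. k1Gt * (norm z)\<^sup>2 \<le> z \<bullet> ((Gt k ** transpose (Gt k)) *v z)"
    and "Gt k *v z = 0 \<Longrightarrow> k1B * (norm z)\<^sup>2 \<le> z \<bullet> (Bt k *v z)"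
    and "onorm (\<lambda>z. Bt k *v z) \<le> k2B"
  using assms unfolding A1_bounds_def by blast+

lemma dq_ge_feasibility_plus_curvature:
  assumes "0 \<le> \<tau>" "\<sigma> \<le> 1"
    and merit: "0 < g \<bullet> d + max (d \<bullet> (B *v d)) 0 \<Longrightarrow>
                  \<tau> * (g \<bullet> d + max (d \<bullet> (B *v d)) 0) \<le> (1 - \<sigma>) * norm cx"
  shows "\<sigma> * norm cx + \<tau> / 2 * max (d \<bullet> (B *v d)) 0 \<le> dq d \<tau> cx g B"
proof (cases "0 < g \<bullet> d + max (d \<bullet> (B *v d)) 0")
  case True
  with merit show ?thesis
    by (simp add: dq_def algebra_simps)
next
  case False
  then have "\<tau> * (g \<bullet> d + max (d \<bullet> (B *v d)) 0) \<le> 0"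
    using \<open>0 \<le> \<tau>\<close> by (simp add: mult_nonneg_nonpos)
  moreover have "\<sigma> * norm cx \<le> norm cx"
    using \<open>\<sigma> \<le> 1\<close> mult_right_mono[of \<sigma> 1 "norm cx"] by simp
  ultimately show ?thesis
    by (simp add: dq_def algebra_simps)
qed

lemma sufficient_decrease_constant:
  fixes \<tau> \<tau>0 \<sigma> k1 ku kv a2 v2 c M :: real
  assumes "0 \<le> \<tau>" "\<tau> \<le> \<tau>0" "0 < \<tau>0" "0 < \<sigma>" "0 < k1" "1 \<le> ku" "0 \<le> kv"
    and "0 \<le> v2" "0 \<le> c" "0 \<le> M" "v2 \<le> kv * c"
    and curv: "ku * v2 \<le> a2 \<Longrightarrow> k1 / 2 * a2 \<le> M"
  shows "min (k1 / 8) (\<sigma> / (\<tau>0 * ((ku + 1) * kv + 1))) * \<tau> * (a2 + v2 + c)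
           \<le> \<sigma> * c + \<tau> / 2 * M"
proof -
  define K where "K = (ku + 1) * kv + 1"
  define kq where "kq = min (k1 / 8) (\<sigma> / (\<tau>0 * K))"
  have "1 \<le> K"
    using assms by (simp add: K_def)
  have "0 \<le> kq"
    using assms \<open>1 \<le> K\<close> by (simp add: kq_def)
  have "\<tau> * K \<le> \<tau>0 * K"
    using assms \<open>1 \<le> K\<close> by (simp add: mult_right_mono)
  then have "kq * \<tau> * K \<le> kq * (\<tau>0 * K)"
    using \<open>0 \<le> kq\<close> by (simp add: mult_left_mono mult.assoc)
  also have "\<dots> \<le> \<sigma>"
  proof -
    have "kq \<le> \<sigma> / (\<tau>0 * K)"
      unfolding kq_def by (rule min.cobounded2)
    then show ?thesis
      using assms \<open>1 \<le> K\<close> by (simp add: pos_le_divide_eq)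
  qed
  finally have kq_tau: "kq * \<tau> * K \<le> \<sigma>" .
  have "kq * \<tau> * 1 \<le> kq * \<tau> * K"
    using \<open>1 \<le> K\<close> \<open>0 \<le> kq\<close> \<open>0 \<le> \<tau>\<close> by (intro mult_left_mono) auto
  with kq_tau have "kq * \<tau> \<le> \<sigma>"
    by simp
  show ?thesis
  proof (cases "ku * v2 \<le> a2")
    case True
    then have "a2 + v2 \<le> 2 * a2"
      using assms mult_right_mono[of 1 ku v2] by simp
    have "kq \<le> k1 / 8"
      unfolding kq_def by (rule min.cobounded1)
    then have "kq * \<tau> \<le> k1 / 8 * \<tau>"
      using \<open>0 \<le> \<tau>\<close> by (rule mult_right_mono)
    then have "kq * \<tau> * (a2 + v2) \<le> k1 / 8 * \<tau> * (2 * a2)"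
      using \<open>a2 + v2 \<le> 2 * a2\<close> assms True mult_mono[of "kq * \<tau>" "k1 / 8 * \<tau>" "a2 + v2" "2 * a2"]
      by (simp add: mult_right_mono)
    also have "\<dots> \<le> \<tau> / 2 * M"
      using curv[OF True] \<open>0 \<le> \<tau>\<close> mult_left_mono[of "k1 / 2 * a2" M "\<tau> / 2"] by simp
    finally have "kq * \<tau> * (a2 + v2) \<le> \<tau> / 2 * M" .
    moreover have "kq * \<tau> * c \<le> \<sigma> * c"
      using \<open>kq * \<tau> \<le> \<sigma>\<close> \<open>0 \<le> c\<close> by (rule mult_right_mono)
    ultimately show ?thesis
      by (simp add: kq_def K_def algebra_simps)
  next
    case False
    then have "a2 + v2 + c \<le> K * c"
      using assms mult_left_mono[of v2 "kv * c" "ku + 1"] by (simp add: K_def algebra_simps)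
    then have "kq * \<tau> * (a2 + v2 + c) \<le> kq * \<tau> * K * c"
      using assms \<open>0 \<le> kq\<close> by (simp add: mult_left_mono mult.assoc)
    also have "\<dots> \<le> \<sigma> * c"
      using kq_tau assms by (simp add: mult_right_mono)
    finally show ?thesis
      using assms by (simp add: kq_def K_def add_increasing2)
  qed
qed

lemma dfssqp_normal_step_bound:
  assumes run: "dfssqp_run F c xi Dl Dt b bt alpha beta sgm eps psi p kf kc g0 G0 tau0 nu0
                  x lam gbar Gbar Bbar Gt Bt dx dlam tau nu abar"
    and A1: "A1_bounds c Gjac X Dl Dt b bt x Gt Bt kcb k1G k2G k1Gt k2Gt k1B k2B"
    and "dx k = u + v" "Gt k *v u = 0" "v \<in> range (\<lambda>w. transpose (Gt k) *v w)" "0 < k1Gt"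
  shows "max (norm v) ((norm v)\<^sup>2) \<le> (1 / sqrt k1Gt + kcb / k1Gt) * norm (c (x k))"
proof -
  have "0 \<le> kcb"
    using order.trans[OF norm_ge_zero A1_boundsD(1)[OF A1]] .
  have "Gt k *v v = - c (x k)"
    using dfssqp_run_linearized_constraint[OF run, of k] assms(3,4)
    by (simp add: matrix_vector_right_distrib)
  then have normal: "sqrt k1Gt * norm v \<le> norm (c (x k))"
    using norm_range_transpose_le[OF A1_boundsD(2)[OF A1] assms(6,5)] by simp
  then have norm_v: "norm v \<le> 1 / sqrt k1Gt * norm (c (x k))"
    using \<open>0 < k1Gt\<close> by (simp add: field_simps)
  have "k1Gt * (norm v)\<^sup>2 \<le> (norm (c (x k)))\<^sup>2"
    using power_mono[OF normal, of 2] \<open>0 < k1Gt\<close> by (simp add: power_mult_distrib)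
  also have "\<dots> \<le> kcb * norm (c (x k))"
    using A1_boundsD(1)[OF A1] by (simp add: power2_eq_square mult_right_mono)
  finally have norm_v_sq: "(norm v)\<^sup>2 \<le> kcb / k1Gt * norm (c (x k))"
    using \<open>0 < k1Gt\<close> by (simp add: field_simps)
  have "0 \<le> 1 / sqrt k1Gt * norm (c (x k))" "0 \<le> kcb / k1Gt * norm (c (x k))"
    using \<open>0 < k1Gt\<close> \<open>0 \<le> kcb\<close> by simp_all
  with norm_v norm_v_sq show ?thesis
    by (simp add: distrib_right)
qed

lemma dfssqp_tangential_curvature:
  assumes A1: "A1_bounds c Gjac X Dl Dt b bt x Gt Bt kcb k1G k2G k1Gt k2Gt k1B k2B"
    and "dx k = u + v" "Gt k *v u = 0" "0 < k1B"
    and dominant: "(8 * k2B / k1B + 1)\<^sup>2 * (norm v)\<^sup>2 \<le> (norm u)\<^sup>2"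
  shows "k1B / 2 * (norm u)\<^sup>2 \<le> dx k \<bullet> (Bt k *v dx k)"
proof -
  have "((8 * k2B / k1B + 1) * norm v)\<^sup>2 \<le> (norm u)\<^sup>2"
    using dominant by (simp only: power_mult_distrib)
  then have "(8 * k2B / k1B + 1) * norm v \<le> norm u"
    by (rule power2_le_imp_le) simp
  then show ?thesis
    unfolding \<open>dx k = u + v\<close>
    by (rule quadratic_form_tangential_dominant[OF A1_boundsD(3)[OF A1 \<open>Gt k *v u = 0\<close>]
          A1_boundsD(4)[OF A1] \<open>0 < k1B\<close>])
qed

lemma dfssqp_model_reduction_bound:
  assumes run: "dfssqp_run F c xi Dl Dt b bt alpha beta sgm eps psi p kf kc g0 G0 tau0 nu0
                  x lam gbar Gbar Bbar Gt Bt dx dlam tau nu abar"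
    and "dx k = u + v" "orthogonal u v"
    and "0 < sgm" "sgm \<le> 1" "0 \<le> eps" "eps \<le> 1" "0 < tau0" "0 < k1B" "1 \<le> ku" "0 \<le> kv"
    and normal: "(norm v)\<^sup>2 \<le> kv * norm (c (x k))"
    and curv: "ku * (norm v)\<^sup>2 \<le> (norm u)\<^sup>2 \<Longrightarrow> k1B / 2 * (norm u)\<^sup>2 \<le> dx k \<bullet> (Bt k *v dx k)"
  shows "min (k1B / 8) (sgm / (tau0 * ((ku + 1) * kv + 1))) * tau k
           * ((norm (dx k))\<^sup>2 + norm (c (x k))) \<le> dq (dx k) (tau k) (c (x k)) (gbar k) (Bt k)"
proof -
  have tau: "0 \<le> tau k" "tau k \<le> tau0"
    using dfssqp_run_merit_param_bounds[OF run \<open>sgm \<le> 1\<close> \<open>0 \<le> eps\<close> \<open>eps \<le> 1\<close>] \<open>0 < tau0\<close>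
    by auto
  have norm_dx: "(norm (dx k))\<^sup>2 = (norm u)\<^sup>2 + (norm v)\<^sup>2"
    unfolding \<open>dx k = u + v\<close> by (rule norm_add_Pythagorean[OF \<open>orthogonal u v\<close>])
  define M where "M = max (dx k \<bullet> (Bt k *v dx k)) 0"
  have "0 \<le> M"
    by (simp add: M_def)
  have curv_M: "ku * (norm v)\<^sup>2 \<le> (norm u)\<^sup>2 \<Longrightarrow> k1B / 2 * (norm u)\<^sup>2 \<le> M"
    using curv by (simp add: M_def le_max_iff_disj)
  have "min (k1B / 8) (sgm / (tau0 * ((ku + 1) * kv + 1))) * tau k
          * ((norm u)\<^sup>2 + (norm v)\<^sup>2 + norm (c (x k)))
        \<le> sgm * norm (c (x k)) + tau k / 2 * M"
    by (rule sufficient_decrease_constant[OF tau \<open>0 < tau0\<close> \<open>0 < sgm\<close> \<open>0 < k1B\<close>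
          \<open>1 \<le> ku\<close> \<open>0 \<le> kv\<close> _ _ \<open>0 \<le> M\<close> normal curv_M]) simp_all
  also have "\<dots> \<le> dq (dx k) (tau k) (c (x k)) (gbar k) (Bt k)"
    unfolding M_def
    by (rule dq_ge_feasibility_plus_curvature[OF tau(1) \<open>sgm \<le> 1\<close>])
      (rule dfssqp_run_merit_param_mult_le[OF run \<open>sgm \<le> 1\<close> \<open>0 \<le> eps\<close>])
  finally show ?thesis
    by (simp only: norm_dx)
qed

theorem lemma3p8:
  fixes sgm eps psi p kf kc tau0 nu0 kcb k1G k2G k1Gt k2Gt k1B k2B :: real
    and g0 :: "real^'d" and G0 :: "real^'d^'m"
  assumes "0 < sgm" "sgm < 1" "0 < eps" "eps < 1" "psi \<ge> 0" "p \<ge> 1"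
    and "kf > 0" "kc > 0" "tau0 > 0" "nu0 > 0"
    and "kcb > 0" "k1G > 0" "k2G > 0" "k1Gt > 0" "k2Gt > 0" "k1B > 0" "k2B > 0"
  shows "\<exists>kv ku kq. kv > 0 \<and> ku > 0 \<and> kq > 0 \<and>
    (\<forall>(F :: real^'d \<Rightarrow> 's \<Rightarrow> real) (c :: real^'d \<Rightarrow> real^'m) Gjac X xi Dl Dt b bt alpha beta
       x lam gbar Gbar Bbar Gt Bt dx dlam tau nu abar.
       dfssqp_run F c xi Dl Dt b bt alpha beta sgm eps psi p kf kc g0 G0 tau0 nu0
                  x lam gbar Gbar Bbar Gt Bt dx dlam tau nu abar \<and>
       A1_bounds c Gjac X Dl Dt b bt x Gt Bt kcb k1G k2G k1Gt k2Gt k1B k2B \<longrightarrow>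
       (\<forall>k (u :: real^'d) v.
          dx k = u + v \<and> Gt k *v u = 0 \<and> v \<in> range (\<lambda>w. transpose (Gt k) *v w) \<longrightarrow>
          max (norm v) ((norm v)\<^sup>2) \<le> kv * norm (c (x k)) \<and>
          ((norm u)\<^sup>2 \<ge> ku * (norm v)\<^sup>2 \<longrightarrow> dx k \<bullet> (Bt k *v dx k) \<ge> 0.5 * k1B * (norm u)\<^sup>2) \<and>
          dq (dx k) (tau k) (c (x k)) (gbar k) (Bt k) \<ge> kq * tau k * ((norm (dx k))\<^sup>2 + norm (c (x k)))))"
proof -
  define kv where "kv = 1 / sqrt k1Gt + kcb / k1Gt"
  define ku where "ku = (8 * k2B / k1B + 1)\<^sup>2"
  define kq where "kq = min (k1B / 8) (sgm / (tau0 * ((ku + 1) * kv + 1)))"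
  have "0 < kv"
    unfolding kv_def using assms by (intro add_pos_pos divide_pos_pos) auto
  have "1 \<le> ku"
    unfolding ku_def using assms by (intro one_le_power) simp
  have "0 < (ku + 1) * kv + 1"
    using \<open>0 < kv\<close> \<open>1 \<le> ku\<close> by (intro add_pos_pos mult_pos_pos) auto
  then have "0 < kq"
    unfolding kq_def using assms by simp
  show ?thesis
  proof (rule exI[of _ kv], rule exI[of _ ku], rule exI[of _ kq], intro conjI allI impI)
    fix F :: "real^'d \<Rightarrow> 's \<Rightarrow> real" and c :: "real^'d \<Rightarrow> real^'m"
      and Gjac X xi Dl Dt b bt alpha beta x lam gbar Gbar Bbar Gt Bt dx dlam tau nu abar k
      and u v :: "real^'d"
    assume "dfssqp_run F c xi Dl Dt b bt alpha beta sgm eps psi p kf kc g0 G0 tau0 nu0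
              x lam gbar Gbar Bbar Gt Bt dx dlam tau nu abar \<and>
            A1_bounds c Gjac X Dl Dt b bt x Gt Bt kcb k1G k2G k1Gt k2Gt k1B k2B"
      and "dx k = u + v \<and> Gt k *v u = 0 \<and> v \<in> range (\<lambda>w. transpose (Gt k) *v w)"
    then have run: "dfssqp_run F c xi Dl Dt b bt alpha beta sgm eps psi p kf kc g0 G0 tau0 nu0
                      x lam gbar Gbar Bbar Gt Bt dx dlam tau nu abar"
      and A1: "A1_bounds c Gjac X Dl Dt b bt x Gt Bt kcb k1G k2G k1Gt k2Gt k1B k2B"
      and split: "dx k = u + v" "Gt k *v u = 0" "v \<in> range (\<lambda>w. transpose (Gt k) *v w)"
      by simp_all
    show normal: "max (norm v) ((norm v)\<^sup>2) \<le> kv * norm (c (x k))"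
      unfolding kv_def using dfssqp_normal_step_bound[OF run A1 split \<open>0 < k1Gt\<close>] .
    have curv: "ku * (norm v)\<^sup>2 \<le> (norm u)\<^sup>2 \<Longrightarrow> k1B / 2 * (norm u)\<^sup>2 \<le> dx k \<bullet> (Bt k *v dx k)"
      unfolding ku_def
      by (rule dfssqp_tangential_curvature[where dx = dx and k = k, OF A1 split(1,2) \<open>0 < k1B\<close>])
    then show "ku * (norm v)\<^sup>2 \<le> (norm u)\<^sup>2 \<Longrightarrow> 0.5 * k1B * (norm u)\<^sup>2 \<le> dx k \<bullet> (Bt k *v dx k)"
      by simp
    have normal_sq: "(norm v)\<^sup>2 \<le> kv * norm (c (x k))"
      using normal by simp
    show "kq * tau k * ((norm (dx k))\<^sup>2 + norm (c (x k))) \<le> dq (dx k) (tau k) (c (x k)) (gbar k) (Bt k)"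
      unfolding kq_def
      by (rule dfssqp_model_reduction_bound[OF run split(1)
            orthogonal_null_space_range_transpose[OF split(2,3)] \<open>0 < sgm\<close> _ _ _ \<open>0 < tau0\<close>
            \<open>0 < k1B\<close> \<open>1 \<le> ku\<close> _ normal_sq curv])
        (use assms \<open>0 < kv\<close> in simp_all)
  qed (use \<open>0 < kv\<close> \<open>1 \<le> ku\<close> \<open>0 < kq\<close> in auto)
qed

end
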